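(* Let $D$ be a connected oriented virtual singular link diagram with $k$ components, and let $S_0$ be the state of $D$ obtained by applying the oriented resolution at every classical and singular crossing of $D$. Then $\overline{R}(S_0)\in\mathbb{Z}[A^4,A^{-4}]\cdot A^{2k}$.
   Context: An oriented virtual singular link diagram is a generic immersion of finitely many oriented circles (its components) into $\mathbb{R}^2$ with finitely many transverse double points, each decorated as a classical crossing (with over/under information and the usual sign $\pm1$), a singular crossing, or a virtual crossing. The diagram is connected if it is not a disjoint union of two nonempty diagrams (i.e., its image in the plane is connected). At a classical or singular crossing, the oriented resolution replaces it by two disjoint arcs respecting orientation; the disoriented resolution replaces it by one arc joining the two incoming ends with a sink bivalent vertex and one arc joining the two outgoing ends with a source bivalent vertex. Virtual crossings are kept. A state $S$ of $D$ is a choice of resolution at every classical and singular crossing; it is a collection of immersed closed curves (all intersections virtual). $\|S\|$ = number of closed curves of $S$; $a(S)$ = #(negative classical crossings with oriented resolution) $-$ #(positive classical crossings with oriented resolution); $b(S)$ the same for disoriented resolutions; $\alpha(S),\beta(S)$ = numbers of singular crossings with oriented, resp. disoriented, resolution. The weighted state contribution is $\overline{R}(S)=A^{2a(S)+4b(S)}(-A^2-A^{-2})^{\alpha(S)+\|S\|}(-A^4-A^{-4})^{\beta(S)}h^{\frac{1-i(S)}{2}}$, where $i(S)\in\{\pm1\}$ is the parity of $S$: choosing a map $\tau$ from the edges of $S$ (arcs between consecutive bivalent vertices; a closed curve without vertices is one edge) to $\{\pm1\}$ with different values on edges sharing a vertex, $i(S)$ is the product over all virtual crossings $v$ of $\tau(e)\tau(e')$,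 where $e,e'$ are the edges meeting at $v$ (independent of $\tau$). (For $S_0$, which has no bivalent vertices, $i(S_0)=1$.) *)

theory Defs
  imports "HOL-Analysis.Analysis" "HOL-Computational_Algebra.Formal_Laurent_Series"
begin

(* Plane = complex numbers.  A diagram with k components is a family of
   closed curves gamma j (j < k), each 1-periodic on the real line,
   parameter domain [0,1) representing the circle. *)

datatype xing = Classical "nat \<times> real" \<comment> \<open>classical; argument = the over-passing preimage\<close>
              | Singular | Virtual

definition preim :: "nat \<Rightarrow> (nat \<Rightarrow> real \<Rightarrow> complex) \<Rightarrow> complex \<Rightarrow> (nat \<times> real) set" where
  "preim k \<gamma> z = {(j,t). j < k \<and> t \<in> {0..<1} \<and> \<gamma> j t = z}"

definition dpoints :: "nat \<Rightarrow> (nat \<Rightarrow> real \<Rightarrow> complex) \<Rightarrow> complex set" where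
  "dpoints k \<gamma> = {z. card (preim k \<gamma> z) = 2}"

definition tangent :: "(nat \<Rightarrow> real \<Rightarrow> complex) \<Rightarrow> nat \<times> real \<Rightarrow> complex" where
  "tangent \<gamma> p = vector_derivative (\<gamma> (fst p)) (at (snd p))"

(* determinant of (u,v) viewed as vectors in R^2 *)
definition cross2 :: "complex \<Rightarrow> complex \<Rightarrow> real" where
  "cross2 u v = Im (cnj u * v)"

definition vs_diagram :: "nat \<Rightarrow> (nat \<Rightarrow> real \<Rightarrow> complex) \<Rightarrow> (complex \<Rightarrow> xing) \<Rightarrow> bool" where
  "vs_diagram k \<gamma> dec \<longleftrightarrow>
     (\<forall>j<k. (\<forall>t. \<gamma> j (t + 1) = \<gamma> j t)
          \<and> \<gamma> j differentiable_on UNIV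
          \<and> continuous_on UNIV (\<lambda>t. vector_derivative (\<gamma> j) (at t))
          \<and> (\<forall>t. vector_derivative (\<gamma> j) (at t) \<noteq> 0))
   \<and> (\<forall>z. finite (preim k \<gamma> z) \<and> card (preim k \<gamma> z) \<le> 2)
   \<and> finite (dpoints k \<gamma>)
   \<and> (\<forall>z \<in> dpoints k \<gamma>. \<forall>p \<in> preim k \<gamma> z. \<forall>q \<in> preim k \<gamma> z.
          p \<noteq> q \<longrightarrow> cross2 (tangent \<gamma> p) (tangent \<gamma> q) \<noteq> 0)
   \<and> (\<forall>z \<in> dpoints k \<gamma>. \<forall>ov. dec z = Classical ov \<longrightarrow> ov \<in> preim k \<gamma> z)"

definition vs_connected :: "nat \<Rightarrow> (nat \<Rightarrow> real \<Rightarrow> complex) \<Rightarrow> bool" where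
  "vs_connected k \<gamma> \<longleftrightarrow> connected (\<Union>j<k. \<gamma> j ` {0..1})"

definition partner :: "nat \<Rightarrow> (nat \<Rightarrow> real \<Rightarrow> complex) \<Rightarrow> nat \<times> real \<Rightarrow> nat \<times> real" where
  "partner k \<gamma> p = (THE q. q \<in> preim k \<gamma> (\<gamma> (fst p) (snd p)) \<and> q \<noteq> p)"

definition xsign :: "nat \<Rightarrow> (nat \<Rightarrow> real \<Rightarrow> complex) \<Rightarrow> (complex \<Rightarrow> xing) \<Rightarrow> complex \<Rightarrow> int" where
  "xsign k \<gamma> dec z = (case dec z of
      Classical ov \<Rightarrow> (if cross2 (tangent \<gamma> ov) (tangent \<gamma> (partner k \<gamma> ov)) > 0 then 1 else -1)
    | _ \<Rightarrow> 0)"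

definition nvcross :: "nat \<Rightarrow> (nat \<Rightarrow> real \<Rightarrow> complex) \<Rightarrow> (complex \<Rightarrow> xing) \<Rightarrow> complex set" where
  "nvcross k \<gamma> dec = {z \<in> dpoints k \<gamma>. dec z \<noteq> Virtual}"

definition passages :: "nat \<Rightarrow> (nat \<Rightarrow> real \<Rightarrow> complex) \<Rightarrow> (complex \<Rightarrow> xing) \<Rightarrow> (nat \<times> real) set" where
  "passages k \<gamma> dec = {(j,t). j < k \<and> t \<in> {0..<1} \<and> \<gamma> j t \<in> nvcross k \<gamma> dec}"

(* forward parameter distance on the circle, in (0,1] for s,t in [0,1) *)
definition fdist :: "real \<Rightarrow> real \<Rightarrow> real" where
  "fdist s t = (if t \<le> s then t - s + 1 else t - s)"

definition next_pass :: "nat \<Rightarrow> (nat \<Rightarrow> real \<Rightarrow> complex) \<Rightarrow> (complex \<Rightarrow> xing) \<Rightarrow> nat \<times> real \<Rightarrow> nat \<times> real" where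
  "next_pass k \<gamma> dec p =
     (fst p, arg_min (fdist (snd p)) (\<lambda>t. (fst p, t) \<in> passages k \<gamma> dec))"

(* The arcs of S_0 are indexed by their starting passage.  With the oriented
   resolution at every classical/singular crossing, the arc arriving at the
   passage q continues with the arc leaving from the other passage of the
   same crossing. *)
definition s0_succ :: "nat \<Rightarrow> (nat \<Rightarrow> real \<Rightarrow> complex) \<Rightarrow> (complex \<Rightarrow> xing) \<Rightarrow> nat \<times> real \<Rightarrow> nat \<times> real" where
  "s0_succ k \<gamma> dec p = partner k \<gamma> (next_pass k \<gamma> dec p)"

(* ||S_0||: closed curves made of arcs (orbits of s0_succ), plus the
   components carrying no classical/singular crossing *)
definition s0_curves :: "nat \<Rightarrow> (nat \<Rightarrow> real \<Rightarrow> complex) \<Rightarrow> (complex \<Rightarrow> xing) \<Rightarrow> nat" where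
  "s0_curves k \<gamma> dec =
     card {{(s0_succ k \<gamma> dec ^^ n) p | n. True} | p. p \<in> passages k \<gamma> dec}
     + card {j. j < k \<and> (\<forall>t. (j,t) \<notin> passages k \<gamma> dec)}"

definition s0_a :: "nat \<Rightarrow> (nat \<Rightarrow> real \<Rightarrow> complex) \<Rightarrow> (complex \<Rightarrow> xing) \<Rightarrow> int" where
  "s0_a k \<gamma> dec = int (card {z \<in> dpoints k \<gamma>. xsign k \<gamma> dec z = -1})
                   - int (card {z \<in> dpoints k \<gamma>. xsign k \<gamma> dec z = 1})"

definition s0_alpha :: "nat \<Rightarrow> (nat \<Rightarrow> real \<Rightarrow> complex) \<Rightarrow> (complex \<Rightarrow> xing) \<Rightarrow> nat" where
  "s0_alpha k \<gamma> dec = card {z \<in> dpoints k \<gamma>. dec z = Singular}"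

(* Laurent polynomials in A as integer Laurent series; A = fls_X *)
abbreviation Apow :: "int \<Rightarrow> int fls" where
  "Apow i \<equiv> fls_X_intpow i"

(* weighted state contribution without the h factor
   A^(2a+4b) (-A^2-A^-2)^(alpha+||S||) (-A^4-A^-4)^beta *)
definition state_weight :: "int \<Rightarrow> int \<Rightarrow> nat \<Rightarrow> nat \<Rightarrow> nat \<Rightarrow> int fls" where
  "state_weight a b al be n =
     Apow (2*a + 4*b) * (- Apow 2 - Apow (-2)) ^ (al + n) * (- Apow 4 - Apow (-4)) ^ be"

(* Rbar(S_0): b = beta = 0 and i(S_0) = 1, so h^((1-i)/2) = 1 *)
definition Rbar_S0 :: "nat \<Rightarrow> (nat \<Rightarrow> real \<Rightarrow> complex) \<Rightarrow> (complex \<Rightarrow> xing) \<Rightarrow> int fls" where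
  "Rbar_S0 k \<gamma> dec = state_weight (s0_a k \<gamma> dec) 0 (s0_alpha k \<gamma> dec) 0 (s0_curves k \<gamma> dec)"

definition in_A4_coset :: "int fls \<Rightarrow> int \<Rightarrow> bool" where
  "in_A4_coset R m \<longleftrightarrow>
     (\<exists>c :: int \<Rightarrow> int. finite {i. c i \<noteq> 0} \<and>
        R = (\<Sum>i \<in> {i. c i \<noteq> 0}. fls_const (c i) * Apow (4*i)) * Apow m)"

end

theory Submission
  imports Defs "HOL-Combinatorics.Orbits" "HOL-Combinatorics.Permutations"
begin

text \<open>
  Let \<open>P\<close> be the set of passages of the curves through classical and singular crossings; there
  are two per crossing, so \<open>|P| = 2c\<close>. Three permutations of \<open>P\<close> matter: the involution \<open>\<sigma>\<close>
  exchanging the two passages of each crossing (\<open>c\<close> orbits), the map \<open>\<nu>\<close> to the next passage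
  along the same component (one orbit for each of the \<open>J\<close> components meeting a crossing), and
  \<open>\<sigma> \<circ> \<nu>\<close>, which follows the arcs of \<open>S\<^sub>0\<close> (one orbit per curve of \<open>S\<^sub>0\<close> through a crossing).
  Since \<open>sign \<pi> = (-1)^(|P| + #orbits \<pi>)\<close>, multiplicativity of the sign makes
  \<open>#orbits (\<sigma> \<circ> \<nu>) + c + J\<close> even. With \<open>a \<equiv> c - \<alpha> (mod 2)\<close> and \<open>\<parallel>S\<^sub>0\<parallel> = #orbits (\<sigma> \<circ> \<nu>) + (k - J)\<close> this
  says that \<open>a + \<alpha> + \<parallel>S\<^sub>0\<parallel> - k\<close> is even, which is exactly what puts
  \<open>A^(2a) (-A\<^sup>2 - A^(-2))^(\<alpha> + \<parallel>S\<^sub>0\<parallel>)\<close> into \<open>\<int>[A\<^sup>4, A^(-4)] A^(2k)\<close>.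
\<close>

section \<open>Orbit counts and the sign of a permutation\<close>

lemma orbit_transpose_compose:
  assumes inj: "inj f" and fx: "f x \<noteq> x" and yx: "y \<noteq> x"
  shows "orbit (Transposition.transpose x (f x) \<circ> f) y = orbit f y - {x}"
proof -
  define h where "h = Transposition.transpose x (f x) \<circ> f"
  have h: "h z = (if f z = x then f x else if z = x then x else f z)" for z
    by (auto simp: h_def transpose_def inj_eq[OF inj])
  have "z \<in> orbit f y \<and> z \<noteq> x" if "z \<in> orbit h y" for z
    using that by induction (use fx yx in \<open>auto simp: h intro: orbit.intros\<close>)
  moreover have "(z \<noteq> x \<longrightarrow> z \<in> orbit h y) \<and> (z = x \<longrightarrow> f x \<in> orbit h y)"
    if "z \<in> orbit f y" for z
    using that
  proof induction
    case base
    show ?case using orbit.base[of h y] fx yx by (auto simp: h[of y] split: if_splits)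
  next
    case (step z)
    show ?case
    proof (cases "z = x")
      case False
      with step have "h z \<in> orbit h y" by (auto intro: orbit.step)
      with False show ?thesis by (auto simp: h[of z] split: if_splits)
    qed (use step fx in auto)
  qed
  ultimately show ?thesis unfolding h_def[symmetric] by blast
qed

lemma card_orbits_transpose_compose:
  assumes perm: "f permutes X" "finite X" and x: "x \<in> X" "f x \<noteq> x"
  shows "card (orbit (Transposition.transpose x (f x) \<circ> f) ` (X - {x})) = card (orbit f ` X)"
proof -
  have pf: "permutation f" using perm permutation_permutes by blast
  have orbit_eq: "orbit f y = orbit f z" if "y \<in> orbit f z" for y z
    using orbit_cyclic_eq3[OF cyclic_on_orbit'[OF pf] that] .
  have fx: "f x \<in> X - {x}" using x perm permutes_in_image by fastforce
  have "orbit (Transposition.transpose x (f x) \<circ> f) ` (X - {x}) = (\<lambda>S. S - {x}) ` orbit f ` (X - {x})"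
    using orbit_transpose_compose[OF permutes_inj[OF perm(1)] x(2)] by (auto simp: image_image)
  also have "orbit f ` (X - {x}) = orbit f ` X"
    using x fx orbit_eq[OF orbit.base[of f x]] by blast
  also have "card ((\<lambda>S. S - {x}) ` orbit f ` X) = card (orbit f ` X)"
  proof (rule card_image, rule inj_onI)
    fix A B assume A: "A \<in> orbit f ` X" and B: "B \<in> orbit f ` X" and AB: "A - {x} = B - {x}"
    have "\<exists>w \<in> A - {x}. A = orbit f w" if "A \<in> orbit f ` X" for A
      using that x(2) orbit.base[of f x] orbit_eq permutation_self_in_orbit[OF pf]
      by (metis Diff_iff imageE singletonD)
    then obtain w where "w \<in> A - {x}" "A = orbit f w" using A by blast
    with AB B show "A = B" using orbit_eq by auto
  qed
  finally show ?thesis .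
qed

lemma card_orbits_remove_fixpoint:
  assumes perm: "f permutes X" "finite X" and x: "x \<in> X" "f x = x"
  shows "card (orbit f ` X) = Suc (card (orbit f ` (X - {x})))"
proof -
  have "{x} \<notin> orbit f ` (X - {x})"
  proof
    assume "{x} \<in> orbit f ` (X - {x})"
    then obtain y where "y \<in> X - {x}" "f y = x"
      using orbit.base[of f] by (metis imageE singletonD)
    then show False using x(2) permutes_inj[OF perm(1)] by (metis DiffD2 injD singletonI)
  qed
  moreover have "orbit f ` X = insert {x} (orbit f ` (X - {x}))"
    using x orbit_eq_singleton_iff[of f x] by blast
  ultimately show ?thesis using perm(2) by simp
qed

lemma sign_eq_card_orbits:
  assumes "f permutes X" "finite X"
  shows "sign f = (-1::int) ^ (card X + card (orbit f ` X))"
  using assms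
proof (induction "card X" arbitrary: X f)
  case 0
  then show ?case by simp
next
  case (Suc n)
  then obtain x where x: "x \<in> X" by fastforce
  have n: "card (X - {x}) = n" using Suc.hyps(2) Suc.prems(2) x by simp
  show ?case
  proof (cases "f x = x")
    case True
    have "f permutes X - {x}" using Suc.prems(1) True by (rule_tac permutes_superset) auto
    then have "sign f = (-1) ^ (n + card (orbit f ` (X - {x})))"
      using Suc.hyps(1)[OF n[symmetric]] Suc.prems(2) n by simp
    then show ?thesis
      using Suc.hyps(2)[symmetric] card_orbits_remove_fixpoint[OF Suc.prems x True] by simp
  next
    case False
    define h where "h = Transposition.transpose x (f x) \<circ> f"
    have "h permutes X" unfolding h_def
      using Suc.prems(1) permutes_swap_id[OF x permutes_in_image[OF Suc.prems(1), THEN iffD2, OF x]]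
      by (rule permutes_compose)
    then have "h permutes X - {x}" by (rule_tac permutes_superset) (auto simp: h_def)
    then have "sign h = (-1) ^ (n + card (orbit f ` X))"
      using Suc.hyps(1)[OF n[symmetric]] Suc.prems(2) n
        card_orbits_transpose_compose[OF Suc.prems x False] by (simp add: h_def)
    moreover have "sign h = - sign f" unfolding h_def
      using Suc.prems False permutation_permutes[of f]
      by (auto simp: sign_compose[OF permutation_swap_id] sign_swap_id)
    ultimately show ?thesis using Suc.hyps(2)[symmetric] by simp
  qed
qed

lemma even_card_orbits_compose:
  assumes f: "f permutes X" and g: "g permutes X" and X: "finite X"
  shows "even (card X + card (orbit (g \<circ> f) ` X) + card (orbit g ` X) + card (orbit f ` X))"
proof -
  have "sign (g \<circ> f) = sign g * sign f"
    using f g X permutation_permutes sign_compose by blast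
  then have "(-1::int) ^ (card X + card (orbit (g \<circ> f) ` X))
      = (-1) ^ (card X + card (orbit g ` X)) * (-1) ^ (card X + card (orbit f ` X))"
    unfolding sign_eq_card_orbits[OF permutes_compose[OF f g] X]
      sign_eq_card_orbits[OF f X] sign_eq_card_orbits[OF g X] .
  then show ?thesis by (auto simp: minus_one_power_iff split: if_splits)
qed

section \<open>Laurent polynomials in \<open>A\<close>\<close>

lemma loop_value_factor: "- Apow 2 - Apow (-2) = - (Apow (-2) * (1 + Apow 4))"
proof -
  have "Apow (-2) * Apow 4 = Apow 2"
    using fls_X_intpow_times_fls_X_intpow[of "-2" 4] by simp
  then show ?thesis by (simp add: algebra_simps)
qed

lemma Apow_times_loop_power:
  fixes a :: int and m :: nat
  shows "Apow (2*a) * (- Apow 2 - Apow (-2)) ^ m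
    = (\<Sum>j\<le>m. fls_const ((-1)^m * int (m choose j)) * Apow (2*a - 2 * int m + 4 * int j))"
proof -
  have "Apow (2*a) * (- Apow 2 - Apow (-2)) ^ m
        = Apow (2*a) * ((-1)^m * (Apow (-2))^m * (1 + Apow 4)^m)"
    unfolding loop_value_factor power_minus[of "Apow (-2) * (1 + Apow 4)"] power_mult_distrib
    by (simp only: mult.assoc)
  also have "(Apow (-2))^m = Apow (int m * -2)" by (rule fls_X_intpow_power)
  also have "(1 + Apow 4)^m = (\<Sum>j\<le>m. of_nat (m choose j) * Apow (int j * 4))"
    by (simp only: add.commute[of 1] binomial_ring power_one mult_1_right fls_X_intpow_power)
  also have "Apow (2*a) * ((-1)^m * Apow (int m * -2) * (\<Sum>j\<le>m. of_nat (m choose j) * Apow (int j * 4)))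
      = (\<Sum>j\<le>m. fls_const ((-1)^m * int (m choose j))
          * (Apow (2*a) * Apow (int m * -2) * Apow (int j * 4)))"
    by (simp only: sum_distrib_left fls_of_nat fls_const_power fls_const_uminus fls_const_1
        fls_const_mult_const[symmetric] of_int_of_nat_eq mult_ac)
  also have "\<dots> = (\<Sum>j\<le>m. fls_const ((-1)^m * int (m choose j)) * Apow (2*a - 2 * int m + 4 * int j))"
  proof (rule sum.cong[OF refl])
    fix j
    have "2*a + int m * -2 + int j * 4 = 2*a - 2 * int m + 4 * int j" by simp
    then show "fls_const ((-1)^m * int (m choose j)) * (Apow (2*a) * Apow (int m * -2) * Apow (int j * 4))
        = fls_const ((-1)^m * int (m choose j)) * Apow (2*a - 2 * int m + 4 * int j)"
      by (simp only: fls_X_intpow_times_fls_X_intpow)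
  qed
  finally show ?thesis .
qed

lemma in_A4_coset_Apow_times_power:
  fixes a k :: int and m :: nat
  assumes "even (a + int m - k)"
  shows "in_A4_coset (Apow (2*a) * (- Apow 2 - Apow (-2)) ^ m) (2*k)"
proof -
  obtain e where e: "a - int m - k = 2 * e"
    using assms by (metis diff_add_cancel dvd_def even_add mult_2 even_mult_iff)
  define c where
    "c i = (if e \<le> i \<and> i \<le> e + int m then (-1)^m * int (m choose nat (i - e)) else 0)" for i
  have supp: "{i. c i \<noteq> 0} = {e..e + int m}"
    by (auto simp: c_def)
  have "Apow (2*a) * (- Apow 2 - Apow (-2)) ^ m
      = (\<Sum>j\<le>m. fls_const (c (e + int j)) * Apow (4 * (e + int j))) * Apow (2*k)"
    unfolding Apow_times_loop_power sum_distrib_right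
  proof (rule sum.cong)
    fix j assume "j \<in> {..m}"
    then have "c (e + int j) = (-1)^m * int (m choose j)" by (simp add: c_def)
    moreover have "2*a - 2 * int m + 4 * int j = 4 * (e + int j) + 2*k" using e by simp
    ultimately show "fls_const ((-1)^m * int (m choose j)) * Apow (2*a - 2 * int m + 4 * int j)
        = fls_const (c (e + int j)) * Apow (4 * (e + int j)) * Apow (2*k)"
      by (simp only: mult.assoc fls_X_intpow_times_fls_X_intpow)
  qed simp
  also have "(\<Sum>j\<le>m. fls_const (c (e + int j)) * Apow (4 * (e + int j)))
      = (\<Sum>i\<in>{i. c i \<noteq> 0}. fls_const (c i) * Apow (4*i))"
  proof -
    have "{e..e + int m} = (\<lambda>j. e + int j) ` {..m}"
      by (auto simp: image_iff intro!: bexI[of _ "nat (x - e)" for x])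
    moreover have "inj_on (\<lambda>j. e + int j) {..m}" by (auto simp: inj_on_def)
    ultimately show ?thesis unfolding supp by (simp add: sum.reindex)
  qed
  finally show ?thesis
    unfolding in_A4_coset_def by (intro exI[of _ c]) (simp add: supp)
qed

section \<open>The successor map on a finite subset of the circle\<close>

text \<open>The forward arcs from \<open>s\<close> to \<open>s'\<close> and from \<open>s'\<close> back to \<open>s\<close> make up one turn, so
  no point is reached from \<open>s\<close> no later than \<open>s'\<close> and from \<open>s'\<close> no later than \<open>s\<close>.\<close>

lemma not_fdist_le_both:
  assumes "s \<in> {0..<1}" "s' \<in> {0..<1}" "u \<in> {0..<1}" "s \<noteq> s'"
  shows "\<not> (fdist s u \<le> fdist s s' \<and> fdist s' u \<le> fdist s' s)"
  using assms unfolding fdist_def by auto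

text \<open>Since \<open>fdist s s = 1\<close>, the point \<open>s\<close> itself only counts as its own successor when it is
  the only point of \<open>T\<close>.\<close>

definition circle_next :: "real set \<Rightarrow> real \<Rightarrow> real" where
  "circle_next T s = arg_min (fdist s) (\<lambda>t. t \<in> T)"

lemma circle_next:
  assumes "finite T" "T \<noteq> {}"
  shows "circle_next T s \<in> T" "t \<in> T \<Longrightarrow> fdist s (circle_next T s) \<le> fdist s t"
proof -
  have "is_arg_min (fdist s) (\<lambda>t. t \<in> T) (circle_next T s)"
    unfolding circle_next_def arg_min_def
    by (rule someI_ex) (use ex_is_arg_min_if_finite[OF assms] in blast)
  then show "circle_next T s \<in> T" "t \<in> T \<Longrightarrow> fdist s (circle_next T s) \<le> fdist s t"
    by (auto simp: is_arg_min_linorder)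
qed

lemma inj_on_circle_next:
  assumes "finite T" "T \<subseteq> {0..<1}"
  shows "inj_on (circle_next T) T"
proof (rule inj_onI, rule ccontr)
  fix s s' assume s: "s \<in> T" "s' \<in> T" "circle_next T s = circle_next T s'" "s \<noteq> s'"
  then have "circle_next T s \<in> T" using circle_next(1)[OF assms(1)] by blast
  then show False using not_fdist_le_both[of s s' "circle_next T s"] circle_next(2)[OF assms(1)] s assms(2)
    by (metis empty_iff subsetD)
qed

lemma circle_next_image:
  assumes "finite T" "T \<subseteq> {0..<1}"
  shows "circle_next T ` T = T"
proof (rule endo_inj_surj[OF assms(1) _ inj_on_circle_next[OF assms]])
  show "circle_next T ` T \<subseteq> T" using circle_next(1)[OF assms(1)] by blast
qed

lemma cyclic_on_circle_next:
  assumes T: "finite T" "T \<subseteq> {0..<1}" and s: "s \<in> T"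
  shows "cyclic_on (circle_next T) T"
proof -
  let ?f = "circle_next T"
  let ?O = "insert s (orbit ?f s)"
  txt \<open>A point \<open>t\<close> missed by the orbit and closest to \<open>s\<close> has a missed predecessor \<open>u\<close>
    lying behind it, so the step from \<open>u\<close> to \<open>t\<close> would jump over \<open>s\<close>.\<close>
  have T_sub: "T \<subseteq> ?O"
  proof (rule ccontr)
    assume "\<not> T \<subseteq> ?O"
    then have "T - ?O \<noteq> {}" by blast
    then obtain t where "is_arg_min (fdist s) (\<lambda>x. x \<in> T - ?O) t"
      using ex_is_arg_min_if_finite[of "T - ?O" "fdist s"] T(1) by blast
    then have t: "t \<in> T - ?O" and t_min: "\<And>t'. t' \<in> T - ?O \<Longrightarrow> fdist s t \<le> fdist s t'"
      by (simp_all add: is_arg_min_linorder)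
    have "t \<in> ?f ` T" using t circle_next_image[OF T] by simp
    then obtain u where u: "u \<in> T" "?f u = t" by (metis imageE)
    have "u \<notin> ?O" using t u(2) orbit.base[of ?f s] orbit.step[of u ?f s] by auto
    then have "fdist s t \<le> fdist s u" "u \<noteq> s" using t_min u(1) by auto
    moreover have "fdist u t \<le> fdist u s" using circle_next(2)[OF T(1), of s u] s u by auto
    ultimately show False using not_fdist_le_both[of s u t] s t u(1) T(2) by blast
  qed
  have "s \<in> orbit ?f s"
  proof -
    have "s \<in> ?f ` T" using s circle_next_image[OF T] by simp
    then obtain u where "u \<in> T" "?f u = s" by (metis imageE)
    then show ?thesis using T_sub orbit.base[of ?f s] orbit.step[of u ?f s] by auto
  qed
  moreover have "orbit ?f s \<subseteq> T"
  proof
    fix t assume "t \<in> orbit ?f s"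
    then show "t \<in> T" by induction (use s circle_next(1)[OF T(1)] in auto)
  qed
  ultimately show ?thesis using T_sub s by (intro cyclic_on_singleI) auto
qed

section \<open>Passages of a diagram\<close>

context
  fixes k :: nat and \<gamma> :: "nat \<Rightarrow> real \<Rightarrow> complex" and dec :: "complex \<Rightarrow> xing"
  assumes vs: "vs_diagram k \<gamma> dec"
begin

abbreviation "Pass \<equiv> passages k \<gamma> dec"
abbreviation "Cr \<equiv> nvcross k \<gamma> dec"
abbreviation "pt p \<equiv> \<gamma> (fst p) (snd p)"
abbreviation "track j \<equiv> {t. (j, t) \<in> Pass}"

lemma finite_preim: "finite (preim k \<gamma> z)" and finite_dpoints: "finite (dpoints k \<gamma>)"
  using vs unfolding vs_diagram_def by auto

lemma preim_pt: "q \<in> preim k \<gamma> z \<Longrightarrow> pt q = z"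
  by (auto simp: preim_def)

lemma passages_iff: "p \<in> Pass \<longleftrightarrow> p \<in> preim k \<gamma> (pt p) \<and> pt p \<in> Cr"
  by (cases p) (auto simp: passages_def preim_def)

lemma passages_eq_UN: "Pass = (\<Union>z\<in>Cr. preim k \<gamma> z)"
  using passages_iff preim_pt by blast

lemma passages_subset: "p \<in> Pass \<Longrightarrow> fst p < k \<and> snd p \<in> {0..<1}"
  by (cases p) (auto simp: passages_def)

lemma finite_nvcross: "finite Cr"
  using finite_dpoints by (simp add: nvcross_def)

lemma finite_passages: "finite Pass"
  unfolding passages_eq_UN using finite_nvcross finite_preim by blast

lemma card_preim_nvcross: "z \<in> Cr \<Longrightarrow> card (preim k \<gamma> z) = 2"
  by (simp add: nvcross_def dpoints_def)

lemma card_passages: "card Pass = 2 * card Cr"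
proof -
  have "card Pass = (\<Sum>z\<in>Cr. card (preim k \<gamma> z))"
    unfolding passages_eq_UN
    by (rule card_UN_disjoint[OF finite_nvcross]) (auto simp: finite_preim dest: preim_pt)
  then show ?thesis using card_preim_nvcross by simp
qed

lemma partner:
  assumes "p \<in> Pass"
  shows "preim k \<gamma> (pt p) = {p, partner k \<gamma> p}" "partner k \<gamma> p \<noteq> p"
    "partner k \<gamma> p \<in> Pass" "partner k \<gamma> (partner k \<gamma> p) = p"
proof -
  have p: "p \<in> preim k \<gamma> (pt p)" "card (preim k \<gamma> (pt p)) = 2"
    using assms passages_iff card_preim_nvcross by auto
  then have "card (preim k \<gamma> (pt p) - {p}) = 1" by simp
  then obtain q where "preim k \<gamma> (pt p) - {p} = {q}" by (rule card_1_singletonE)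
  then have q: "preim k \<gamma> (pt p) = {p, q}" "q \<noteq> p" using p(1) by auto
  have pq: "partner k \<gamma> p = q"
    unfolding partner_def using q by (rule_tac the_equality) auto
  have ptq: "pt q = pt p" using q preim_pt by blast
  show "preim k \<gamma> (pt p) = {p, partner k \<gamma> p}" "partner k \<gamma> p \<noteq> p" using q pq by auto
  show "partner k \<gamma> p \<in> Pass" using assms q pq ptq passages_iff by auto
  have "partner k \<gamma> q = p"
    unfolding partner_def using q ptq by (rule_tac the_equality) auto
  then show "partner k \<gamma> (partner k \<gamma> p) = p" using pq by simp
qed

definition partner_perm :: "nat \<times> real \<Rightarrow> nat \<times> real" where
  "partner_perm p = (if p \<in> Pass then partner k \<gamma> p else p)"

lemma partner_perm_permutes: "partner_perm permutes Pass"
proof (rule bij_imp_permutes)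
  show "bij_betw partner_perm Pass Pass"
    by (rule bij_betw_byWitness[where f'=partner_perm]) (auto simp: partner_perm_def partner)
qed (simp add: partner_perm_def)

lemma orbit_partner_perm: "p \<in> Pass \<Longrightarrow> orbit partner_perm p = preim k \<gamma> (pt p)"
proof -
  assume p: "p \<in> Pass"
  have "(partner_perm ^^ 2) p = p" using p by (simp add: partner_perm_def partner numeral_2_eq_2)
  then have "orbit partner_perm p = {(partner_perm ^^ m) p | m. m < 2}"
    by (rule orbit_altdef_bounded) simp
  also have "\<dots> = {p, partner_perm p}"
    by (auto simp: less_2_cases_iff intro: exI[of _ 0] exI[of _ 1])
  also have "partner_perm p = partner k \<gamma> p" using p by (simp add: partner_perm_def)
  finally show ?thesis using p by (simp add: partner)
qed

lemma card_orbits_partner_perm: "card (orbit partner_perm ` Pass) = card Cr"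
proof -
  have "orbit partner_perm ` Pass = preim k \<gamma> ` Cr"
  proof
    show "orbit partner_perm ` Pass \<subseteq> preim k \<gamma> ` Cr"
      using orbit_partner_perm passages_iff by auto
    show "preim k \<gamma> ` Cr \<subseteq> orbit partner_perm ` Pass"
    proof
      fix S assume "S \<in> preim k \<gamma> ` Cr"
      then obtain z where z: "z \<in> Cr" "S = preim k \<gamma> z" by auto
      then have "card S = 2" using card_preim_nvcross by simp
      then obtain p where "p \<in> S" by (metis card.empty equals0I zero_neq_numeral)
      then have "p \<in> Pass" "pt p = z" using z passages_eq_UN preim_pt by blast+
      then have "p \<in> Pass" "S = orbit partner_perm p" using z orbit_partner_perm by simp_all
      then show "S \<in> orbit partner_perm ` Pass" by blast
    qed
  qed
  moreover have "inj_on (preim k \<gamma>) Cr"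
  proof (rule inj_onI)
    fix z w assume "z \<in> Cr" "preim k \<gamma> z = preim k \<gamma> w"
    moreover obtain p where "p \<in> preim k \<gamma> z"
      using card_preim_nvcross[OF \<open>z \<in> Cr\<close>] by (metis card.empty equals0I zero_neq_numeral)
    ultimately show "z = w" using preim_pt by metis
  qed
  ultimately show ?thesis by (simp add: card_image)
qed

lemma finite_track: "finite (track j)"
proof (rule finite_subset)
  show "track j \<subseteq> snd ` Pass" by force
qed (simp add: finite_passages)

lemma track_subset: "track j \<subseteq> {0..<1}"
  using passages_subset by fastforce

lemma next_pass_eq: "next_pass k \<gamma> dec p = (fst p, circle_next (track (fst p)) (snd p))"
  by (simp add: next_pass_def circle_next_def)

definition next_perm :: "nat \<times> real \<Rightarrow> nat \<times> real" where
  "next_perm p = (if p \<in> Pass then next_pass k \<gamma> dec p else p)"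

lemma next_pass_in_passages: "p \<in> Pass \<Longrightarrow> next_pass k \<gamma> dec p \<in> Pass"
  using circle_next(1)[OF finite_track, of "fst p"] by (cases p) (fastforce simp: next_pass_eq)

lemma next_perm_permutes: "next_perm permutes Pass"
proof (rule bij_imp_permutes)
  have inj: "inj_on next_perm Pass"
  proof (rule inj_onI)
    fix p q assume "p \<in> Pass" "q \<in> Pass" "next_perm p = next_perm q"
    then show "p = q"
      using inj_on_circle_next[OF finite_track track_subset, of "fst p"]
      by (cases p, cases q) (auto simp: next_perm_def next_pass_eq inj_on_def)
  qed
  have "next_perm ` Pass \<subseteq> Pass"
    using next_pass_in_passages by (auto simp: next_perm_def)
  then have "next_perm ` Pass = Pass" using endo_inj_surj[OF finite_passages _ inj] by blast
  with inj show "bij_betw next_perm Pass Pass" by (simp add: bij_betw_def)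
qed (simp add: next_perm_def)

lemma orbit_next_perm:
  assumes "p \<in> Pass"
  shows "orbit next_perm p = {q \<in> Pass. fst q = fst p}"
proof -
  obtain j s where p: "p = (j, s)" by fastforce
  have "cyclic_on (circle_next (track j)) (track j)"
    using assms p by (intro cyclic_on_circle_next[OF finite_track track_subset]) auto
  then have "cyclic_on next_perm (Pair j ` track j)"
    by (rule cyclic_on_image) (simp add: next_perm_def next_pass_eq)
  moreover have "Pair j ` track j = {q \<in> Pass. fst q = j}" by force
  ultimately show ?thesis using assms p orbit_cyclic_eq3 by fastforce
qed

lemma card_orbits_next_perm: "card (orbit next_perm ` Pass) = card (fst ` Pass)"
proof -
  have "orbit next_perm ` Pass = (\<lambda>j. {q \<in> Pass. fst q = j}) ` fst ` Pass"
    using orbit_next_perm by (auto simp: image_image)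
  moreover have "inj_on (\<lambda>j. {q \<in> Pass. fst q = j}) (fst ` Pass)"
    by (rule inj_onI) auto
  ultimately show ?thesis by (simp add: card_image)
qed

lemma s0_curves_eq:
  "s0_curves k \<gamma> dec = card (orbit (partner_perm \<circ> next_perm) ` Pass)
     + card {j. j < k \<and> (\<forall>t. (j, t) \<notin> Pass)}"
proof -
  let ?h = "partner_perm \<circ> next_perm"
  have perm: "permutation ?h"
    using permutes_compose[OF next_perm_permutes partner_perm_permutes] finite_passages
    by (auto simp: permutation_permutes)
  have "(s0_succ k \<gamma> dec ^^ n) p = (?h ^^ n) p \<and> (?h ^^ n) p \<in> Pass" if "p \<in> Pass" for p n
    using that by (induction n)
      (auto simp: s0_succ_def next_perm_def partner_perm_def next_pass_in_passages partner)
  then have "{(s0_succ k \<gamma> dec ^^ n) p | n. True} = orbit ?h p" if "p \<in> Pass" for p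
    using that orbit_altdef_permutation[OF perm, of p] by simp
  then have "{{(s0_succ k \<gamma> dec ^^ n) p | n. True} | p. p \<in> Pass} = orbit ?h ` Pass"
    by blast
  then show ?thesis by (simp add: s0_curves_def)
qed

lemma card_nvcross_eq:
  "card Cr = card {z \<in> dpoints k \<gamma>. xsign k \<gamma> dec z = -1}
     + card {z \<in> dpoints k \<gamma>. xsign k \<gamma> dec z = 1} + s0_alpha k \<gamma> dec"
proof -
  let ?N = "{z \<in> dpoints k \<gamma>. xsign k \<gamma> dec z = -1}"
  let ?P = "{z \<in> dpoints k \<gamma>. xsign k \<gamma> dec z = 1}"
  let ?S = "{z \<in> dpoints k \<gamma>. dec z = Singular}"
  have "z \<in> Cr \<longleftrightarrow> z \<in> ?N \<union> ?P \<union> ?S" for z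
    by (cases "dec z") (auto simp: nvcross_def xsign_def)
  then have "Cr = ?N \<union> ?P \<union> ?S" by blast
  moreover have "?N \<inter> ?P = {}" "(?N \<union> ?P) \<inter> ?S = {}"
    by (auto simp: xsign_def)
  moreover have "finite ?N" "finite ?P" "finite ?S" using finite_dpoints by auto
  ultimately show ?thesis unfolding s0_alpha_def by (simp add: card_Un_disjoint)
qed

lemma card_components_split:
  "card (fst ` Pass) + card {j. j < k \<and> (\<forall>t. (j, t) \<notin> Pass)} = k"
proof -
  have "fst ` Pass \<subseteq> {..<k}" using passages_subset by auto
  moreover have "{j. j < k \<and> (\<forall>t. (j, t) \<notin> Pass)} = {..<k} - fst ` Pass" by force
  ultimately show ?thesis
    using card_mono[OF finite_lessThan] by (simp add: card_Diff_subset finite_subset)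
qed

lemma even_s0_exponent:
  "even (s0_a k \<gamma> dec + int (s0_alpha k \<gamma> dec + s0_curves k \<gamma> dec) - int k)"
proof -
  have "even (card Pass + card (orbit (partner_perm \<circ> next_perm) ` Pass)
      + card (orbit partner_perm ` Pass) + card (orbit next_perm ` Pass))"
    by (rule even_card_orbits_compose[OF next_perm_permutes partner_perm_permutes finite_passages])
  then have orbits: "even (2 * card Cr + card (orbit (partner_perm \<circ> next_perm) ` Pass)
      + card Cr + card (fst ` Pass))"
    unfolding card_passages card_orbits_partner_perm card_orbits_next_perm .
  have "even (int n - int p + int (al + cu) - int kk)"
    if "even (2 * c + h + c + j)" "c = n + p + al" "cu = h + k0" "j + k0 = kk"
    for n p al cu kk c h j k0 :: nat
  proof -
    have "even (n + p + al + cu + kk)" using that by presburger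
    then show ?thesis by presburger
  qed
  from this[OF orbits card_nvcross_eq s0_curves_eq card_components_split]
  show ?thesis unfolding s0_a_def .
qed

end

theorem lemma4p2:
  fixes k :: nat and \<gamma> :: "nat \<Rightarrow> real \<Rightarrow> complex" and dec :: "complex \<Rightarrow> xing"
  assumes "vs_diagram k \<gamma> dec"
    and "vs_connected k \<gamma>"
  shows "in_A4_coset (Rbar_S0 k \<gamma> dec) (2 * int k)"
proof -
  have weight: "Rbar_S0 k \<gamma> dec = Apow (2 * s0_a k \<gamma> dec)
      * (- Apow 2 - Apow (-2)) ^ (s0_alpha k \<gamma> dec + s0_curves k \<gamma> dec)"
    unfolding Rbar_S0_def state_weight_def by simp
  show ?thesis
    unfolding weight by (rule in_A4_coset_Apow_times_power[OF even_s0_exponent[OF assms(1)]])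
qed

end
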